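(* Let $(Z_n)_{n\ge0}$ be a Galton–Watson process with $Z_0=1$ whose offspring variable $\xi$ has mean $\mu<1$ and satisfies $\mathbf{E}[\xi^{1+\epsilon}]<\infty$ for some $\epsilon>0$. Suppose $1<\beta<\mu^{-1}$. Then there exists $\kappa>0$ such that for all $\delta\in(0,\kappa)$ the process $((Z_n\beta^n)^{1+\delta})_{n\ge0}$ is a supermartingale with respect to the natural filtration $\mathcal{F}_n=\sigma(Z_k;k\le n)$. *)

theory Defs
  imports "HOL-Probability.Probability"
begin

text \<open>Galton-Watson process driven by offspring variables X n i
  (number of children of the i-th individual of generation n), with Z 0 = 1.\<close>
fun gw_Z :: "(nat \<Rightarrow> nat \<Rightarrow> 'a \<Rightarrow> nat) \<Rightarrow> nat \<Rightarrow> 'a \<Rightarrow> nat" where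
  "gw_Z X 0 \<omega> = 1"
| "gw_Z X (Suc n) \<omega> = (\<Sum>i<gw_Z X n \<omega>. X n i \<omega>)"

definition natural_filtration :: "'a measure \<Rightarrow> (nat \<Rightarrow> 'a \<Rightarrow> nat) \<Rightarrow> nat \<Rightarrow> 'a measure" where
  "natural_filtration M Z n = sigma (space M) {Z k -` A \<inter> space M | k A. k \<le> n}"

definition supermartingale ::
  "'a measure \<Rightarrow> (nat \<Rightarrow> 'a measure) \<Rightarrow> (nat \<Rightarrow> 'a \<Rightarrow> real) \<Rightarrow> bool" where
  "supermartingale M F Y \<longleftrightarrow>
     (\<forall>n. subalgebra M (F n)) \<and>
     (\<forall>n m. n \<le> m \<longrightarrow> sets (F n) \<subseteq> sets (F m)) \<and>
     (\<forall>n. Y n \<in> borel_measurable (F n)) \<and>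
     (\<forall>n. integrable M (Y n)) \<and>
     (\<forall>n m. n \<le> m \<longrightarrow> (AE \<omega> in M. real_cond_exp M (F n) (Y m) \<omega> \<le> Y n \<omega>))"

end

theory Submission
  imports Defs
begin

text \<open>Given \<open>F\<^sub>n\<close> and \<open>Z\<^sub>n = z \<ge> 1\<close>, the next generation is a sum \<open>S\<^sub>z\<close> of \<open>z\<close> copies of
  \<open>\<xi>\<close> independent of \<open>F\<^sub>n\<close>, so
  \<open>E[(Z\<^sub>n\<^sub>+\<^sub>1 \<beta>^(n+1))^(1+\<delta>) | F\<^sub>n] = (Z\<^sub>n \<beta>^n)^(1+\<delta>) \<beta>^(1+\<delta>) E[(S\<^sub>z/z)^(1+\<delta>)]\<close>.
  Splitting at a level \<open>T\<close>, \<open>y^(1+\<delta>) \<le> T^\<delta> y + T^(\<delta>-\<epsilon>) y^(1+\<epsilon>)\<close>, and Jensen's inequality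
  for the average \<open>S\<^sub>z/z\<close> bound \<open>E[(S\<^sub>z/z)^(1+\<delta>)]\<close> by \<open>T^\<delta> \<mu> + T^(\<delta>-\<epsilon>) E[\<xi>^(1+\<epsilon>)]\<close>
  uniformly in \<open>z\<close>. For \<open>T\<close> large, this bound times \<open>\<beta>^(1+\<delta>)\<close> tends to
  \<open>\<beta>\<mu> + \<beta> T^(-\<epsilon>) E[\<xi>^(1+\<epsilon>)] < 1\<close> as \<open>\<delta> \<rightarrow> 0\<close>, so it stays below \<open>1\<close> for all
  small \<open>\<delta>\<close>.\<close>

lemma convex_on_powr_nonneg:
  fixes p :: real
  assumes "p \<ge> 1"
  shows "convex_on {0..} (\<lambda>x. x powr p)"
proof (rule convex_onI)
  fix t x y :: real assume t: "0 < t" "t < 1" and xy: "x \<in> {0..}" "y \<in> {0..}"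
  have powr_le_self: "s powr p \<le> s" if "0 < s" "s \<le> 1" for s :: real
  proof -
    have "s powr p \<le> s powr 1" using that assms by (intro powr_mono') auto
    then show ?thesis using that by simp
  qed
  consider "x > 0" "y > 0" | "x = 0" | "y = 0" using xy by fastforce
  then show "((1 - t) *\<^sub>R x + t *\<^sub>R y) powr p \<le> (1 - t) * x powr p + t * y powr p"
  proof cases
    case 1
    then show ?thesis using convex_onD[OF powr_convex[OF assms], of t x y] t by auto
  next
    case 2
    have "(t * y) powr p = t powr p * y powr p" using xy t by (simp add: powr_mult)
    also have "\<dots> \<le> t * y powr p" using powr_le_self[of t] t by (intro mult_right_mono) auto
    finally show ?thesis using 2 by simp
  next
    case 3
    have "((1 - t) * x) powr p = (1 - t) powr p * x powr p" using xy t by (simp add: powr_mult)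
    also have "\<dots> \<le> (1 - t) * x powr p" using powr_le_self[of "1 - t"] t by (intro mult_right_mono) auto
    finally show ?thesis using 3 by simp
  qed
qed simp

lemma powr_mean_le_mean_powr:
  fixes a :: "'i \<Rightarrow> real" and p :: real
  assumes "finite I" "I \<noteq> {}" "\<And>i. i \<in> I \<Longrightarrow> a i \<ge> 0" "p \<ge> 1"
  shows "((\<Sum>i\<in>I. a i) / card I) powr p \<le> (\<Sum>i\<in>I. a i powr p) / card I"
proof -
  have "(\<lambda>x. x powr p) (\<Sum>i\<in>I. (1 / card I) *\<^sub>R a i) \<le> (\<Sum>i\<in>I. (1 / card I) * (\<lambda>x. x powr p) (a i))"
    by (rule convex_on_sum[OF _ _ convex_on_powr_nonneg[OF assms(4)]]) (use assms in auto)
  then show ?thesis by (simp add: sum_distrib_left[symmetric] sum_divide_distrib[symmetric])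
qed

lemma powr_le_split_at_level:
  fixes y T \<delta> \<epsilon> :: real
  assumes "y \<ge> 0" "T > 0" "0 \<le> \<delta>" "\<delta> \<le> \<epsilon>"
  shows "y powr (1 + \<delta>) \<le> T powr \<delta> * y + T powr (\<delta> - \<epsilon>) * y powr (1 + \<epsilon>)"
proof (cases "y = 0")
  case False
  then have y: "y > 0" using assms by simp
  have nonneg: "0 \<le> T powr \<delta> * y" "0 \<le> T powr (\<delta> - \<epsilon>) * y powr (1 + \<epsilon>)" using y by auto
  show ?thesis
  proof (cases "y \<le> T")
    case True
    have "y powr (1 + \<delta>) = y * y powr \<delta>" using y by (simp add: powr_add)
    also have "\<dots> \<le> y * T powr \<delta>" using True y assms by (intro mult_left_mono powr_mono2) auto
    finally have "y powr (1 + \<delta>) \<le> T powr \<delta> * y" by (simp add: mult.commute)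
    then show ?thesis using nonneg by linarith
  next
    case False
    have "y powr (1 + \<delta>) = y powr (1 + \<epsilon>) * y powr (\<delta> - \<epsilon>)" using y by (simp add: powr_add[symmetric])
    also have "\<dots> \<le> y powr (1 + \<epsilon>) * T powr (\<delta> - \<epsilon>)" using False y assms
      by (intro mult_left_mono powr_mono2') auto
    finally have "y powr (1 + \<delta>) \<le> T powr (\<delta> - \<epsilon>) * y powr (1 + \<epsilon>)" by (simp add: mult.commute)
    then show ?thesis using nonneg by linarith
  qed
qed simp

lemma exists_contracting_exponents:
  fixes \<beta> \<mu> K \<epsilon> :: real
  assumes "\<beta> > 1" "\<beta> * \<mu> < 1" "\<mu> \<ge> 0" "K \<ge> 0" "\<epsilon> > 0"
  shows "\<exists>T>0. \<exists>\<kappa>>0. \<kappa> \<le> \<epsilon> \<and>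
           (\<forall>\<delta>. 0 < \<delta> \<and> \<delta> < \<kappa> \<longrightarrow> \<beta> powr (1 + \<delta>) * (T powr \<delta> * \<mu> + T powr (\<delta> - \<epsilon>) * K) < 1)"
proof -
  define r where "r = 1 - \<beta> * \<mu>"
  have r: "r > 0" using assms by (simp add: r_def)
  define c where "c = r / (2 * \<beta> * (K + 1))"
  have c: "c > 0" using r assms by (simp add: c_def)
  \<comment> \<open>\<open>T\<close> is chosen so that \<open>\<beta> T^(-\<epsilon>) K < r/2\<close>.\<close>
  define T where "T = c powr (-1 / \<epsilon>)"
  have T: "T > 0" using c by (simp add: T_def)
  have T_powr: "T powr (-\<epsilon>) = c" using c assms by (simp add: T_def powr_powr)
  define g where "g d = \<beta> powr (1 + d) * (T powr d * \<mu> + T powr (d - \<epsilon>) * K)" for d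
  have "\<beta> * (c * K) < r / 2"
  proof -
    have "\<beta> * (c * K) = r * K / (2 * (K + 1))" using assms by (simp add: c_def)
    also have "\<dots> < r / 2" using r assms by (simp add: field_simps)
    finally show ?thesis .
  qed
  then have g0: "g 0 < 1" using T T_powr r assms(1) unfolding r_def g_def by (simp add: distrib_left)
  have "(g \<longlongrightarrow> g 0) (at 0)"
    unfolding g_def using assms T by (intro tendsto_intros) auto
  then have "eventually (\<lambda>d. g d < 1) (at 0)" using g0 by (rule order_tendstoD(2))
  then obtain d where d: "d > 0" "\<And>x. x \<noteq> 0 \<Longrightarrow> dist x 0 < d \<Longrightarrow> g x < 1"
    unfolding eventually_at by blast
  have "\<forall>\<delta>. 0 < \<delta> \<and> \<delta> < min d \<epsilon> \<longrightarrow> g \<delta> < 1" using d(2) by auto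
  then show ?thesis using T d(1) assms(5) unfolding g_def
    by (intro exI[of _ T] conjI exI[of _ "min d \<epsilon>"]) auto
qed

lemma (in sigma_finite_subalgebra) real_cond_exp_le_of_integral_indicator_le:
  assumes f[measurable]: "integrable M f" and g: "integrable M g" "g \<in> borel_measurable F"
    and le: "\<And>A. A \<in> sets F \<Longrightarrow> (\<integral>x. indicator A x * f x \<partial>M) \<le> (\<integral>x. indicator A x * g x \<partial>M)"
  shows "AE x in M. real_cond_exp M F f x \<le> g x"
proof -
  let ?ce = "real_cond_exp M F f"
  define A where "A = {x \<in> space F. g x < ?ce x}"
  have space_F: "space F = space M" using subalg unfolding subalgebra_def by simp
  have AF: "A \<in> sets F" unfolding A_def using g(2) by measurable
  have AM: "A \<in> sets M" using AF subalg unfolding subalgebra_def by auto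
  have integrable_ce: "integrable M (\<lambda>x. indicator A x * ?ce x)"
    using integrable_mult_indicator[OF AM real_cond_exp_int(1)[OF f]] by simp
  have integrable_g: "integrable M (\<lambda>x. indicator A x * g x)"
    using integrable_mult_indicator[OF AM g(1)] by simp
  have "(\<integral>x. indicator A x * ?ce x \<partial>M) = (\<integral>x. indicator A x * f x \<partial>M)"
    using real_cond_exp_intA[OF f AF] unfolding set_lebesgue_integral_def by simp
  also have "\<dots> \<le> (\<integral>x. indicator A x * g x \<partial>M)" using le[OF AF] .
  finally have "(\<integral>x. indicator A x * (?ce x - g x) \<partial>M) \<le> 0"
    using integrable_ce integrable_g by (simp add: right_diff_distrib)
  moreover have nonneg: "0 \<le> indicator A x * (?ce x - g x)" for x
    by (auto simp: A_def indicator_def)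
  moreover have "0 \<le> (\<integral>x. indicator A x * (?ce x - g x) \<partial>M)"
    by (rule integral_nonneg_AE) (simp add: nonneg)
  ultimately have "(\<integral>x. indicator A x * (?ce x - g x) \<partial>M) = 0" by linarith
  then have "AE x in M. indicator A x * (?ce x - g x) = 0"
    using integrable_ce integrable_g nonneg
    by (subst (asm) integral_nonneg_eq_0_iff_AE) (auto simp: right_diff_distrib)
  moreover have "AE x in M. x \<in> space M" by (rule AE_space)
  ultimately show ?thesis
    by eventually_elim (auto simp: A_def indicator_def space_F split: if_splits)
qed

lemma supermartingale_of_one_step:
  assumes sub: "\<And>n. sigma_finite_subalgebra M (F n)"
    and mono: "\<And>n m. n \<le> m \<Longrightarrow> sets (F n) \<subseteq> sets (F m)"
    and adapted: "\<And>n. Y n \<in> borel_measurable (F n)"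
    and integrable: "\<And>n. integrable M (Y n)"
    and step: "\<And>n. AE \<omega> in M. real_cond_exp M (F n) (Y (Suc n)) \<omega> \<le> Y n \<omega>"
  shows "supermartingale M F Y"
proof -
  have subalg: "subalgebra M (F n)" for n using sub sigma_finite_subalgebra.subalg by blast
  have cond_exp_self: "AE \<omega> in M. real_cond_exp M (F n) (Y n) \<omega> \<le> Y n \<omega>" for n
    using sigma_finite_subalgebra.real_cond_exp_F_meas[OF sub integrable adapted, of n]
    by eventually_elim simp
  have "AE \<omega> in M. real_cond_exp M (F n) (Y m) \<omega> \<le> Y n \<omega>" if "n \<le> m" for n m
    using that
  proof (induction m)
    case (Suc m)
    show ?case
    proof (cases "n = Suc m")
      case True
      then show ?thesis using cond_exp_self[of n] by simp
    next
      case False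
      then have "n \<le> m" using Suc.prems by simp
      then have "subalgebra (F m) (F n)"
        using mono[of n m] subalg[of n] subalg[of m] unfolding subalgebra_def by auto
      then have "AE \<omega> in M. real_cond_exp M (F n) (real_cond_exp M (F m) (Y (Suc m))) \<omega>
                   = real_cond_exp M (F n) (Y (Suc m)) \<omega>"
        by (rule sigma_finite_subalgebra.real_cond_exp_nested_subalg[OF sub subalg[of m] _ integrable])
      moreover have "AE \<omega> in M. real_cond_exp M (F n) (real_cond_exp M (F m) (Y (Suc m))) \<omega>
                       \<le> real_cond_exp M (F n) (Y m) \<omega>"
        by (rule sigma_finite_subalgebra.real_cond_exp_mono[OF sub step])
           (auto intro: sigma_finite_subalgebra.real_cond_exp_int(1)[OF sub] integrable)
      moreover have "AE \<omega> in M. real_cond_exp M (F n) (Y m) \<omega> \<le> Y n \<omega>"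
        using Suc.IH \<open>n \<le> m\<close> .
      ultimately show ?thesis by eventually_elim simp
    qed
  qed (use cond_exp_self in simp)
  then show ?thesis
    unfolding supermartingale_def using subalg mono adapted integrable by blast
qed

lemma (in prob_space) indep_var_nn_integral_mult:
  fixes f g :: "'b \<Rightarrow> ennreal"
  assumes indep: "indep_var S U T V"
    and [measurable]: "f \<in> borel_measurable S" "g \<in> borel_measurable T"
  shows "(\<integral>\<^sup>+\<omega>. f (U \<omega>) * g (V \<omega>) \<partial>M) = (\<integral>\<^sup>+\<omega>. f (U \<omega>) \<partial>M) * (\<integral>\<^sup>+\<omega>. g (V \<omega>) \<partial>M)"
proof -
  have "indep_var borel (f \<circ> U) borel (g \<circ> V)"
    by (rule indep_var_compose[OF indep]) auto
  moreover have "(\<lambda>_. borel) = case_bool borel borel"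
    by (rule ext) (simp split: bool.split)
  ultimately have "indep_vars (\<lambda>_. borel) (case_bool (f \<circ> U) (g \<circ> V)) UNIV"
    unfolding indep_var_def by metis
  then have "(\<integral>\<^sup>+\<omega>. (\<Prod>b\<in>UNIV. case_bool (f \<circ> U) (g \<circ> V) b \<omega>) \<partial>M)
      = (\<Prod>b\<in>UNIV. \<integral>\<^sup>+\<omega>. case_bool (f \<circ> U) (g \<circ> V) b \<omega> \<partial>M)"
    by (intro indep_vars_nn_integral) auto
  then show ?thesis by (simp add: UNIV_bool mult.commute o_def)
qed

lemma nn_integral_indicator_split_nat_valued:
  fixes f :: "'a \<Rightarrow> ennreal" and Z :: "'a \<Rightarrow> nat"
  assumes [measurable]: "Z \<in> measurable M (count_space UNIV)" "A \<in> sets M" "f \<in> borel_measurable M"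
  shows "(\<integral>\<^sup>+\<omega>. indicator A \<omega> * f \<omega> \<partial>M) = (\<Sum>z. \<integral>\<^sup>+\<omega>. indicator (A \<inter> Z -` {z}) \<omega> * f \<omega> \<partial>M)"
proof -
  have "(\<integral>\<^sup>+\<omega>. indicator A \<omega> * f \<omega> \<partial>M) = (\<integral>\<^sup>+\<omega>. (\<Sum>z. indicator (A \<inter> Z -` {z}) \<omega> * f \<omega>) \<partial>M)"
  proof (rule nn_integral_cong)
    fix \<omega>
    have "(\<lambda>z. indicator (A \<inter> Z -` {z}) \<omega> * f \<omega>) = (\<lambda>z. if z = Z \<omega> then indicator A \<omega> * f \<omega> else 0)"
      by (auto split: split_indicator)
    then show "indicator A \<omega> * f \<omega> = (\<Sum>z. indicator (A \<inter> Z -` {z}) \<omega> * f \<omega>)"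
      using sums_unique[OF sums_single[of "Z \<omega>" "\<lambda>_. indicator A \<omega> * f \<omega>"]] by simp
  qed
  also have "\<dots> = (\<Sum>z. \<integral>\<^sup>+\<omega>. indicator (A \<inter> Z -` {z}) \<omega> * f \<omega> \<partial>M)"
  proof (rule nn_integral_suminf)
    fix z
    have "A \<inter> Z -` {z} = A \<inter> (Z -` {z} \<inter> space M)" using sets.sets_into_space[OF assms(2)] by blast
    also have "\<dots> \<in> sets M" by measurable
    finally have [measurable]: "A \<inter> Z -` {z} \<in> sets M" .
    show "(\<lambda>\<omega>. indicator (A \<inter> Z -` {z}) \<omega> * f \<omega>) \<in> borel_measurable M" by measurable
  qed
  finally show ?thesis .
qed

lemma
  fixes Z :: "nat \<Rightarrow> 'a \<Rightarrow> nat"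
  assumes Z[measurable]: "\<And>k. Z k \<in> measurable M (count_space UNIV)"
  shows sets_natural_filtration:
      "sets (natural_filtration M Z n) = sigma_sets (space M) {Z k -` A \<inter> space M | k A. k \<le> n}"
    and space_natural_filtration[simp]: "space (natural_filtration M Z n) = space M"
    and subalgebra_natural_filtration: "subalgebra M (natural_filtration M Z n)"
proof -
  have generators: "{Z k -` A \<inter> space M | k A. k \<le> n} \<subseteq> sets M" by auto
  show sets: "sets (natural_filtration M Z n) = sigma_sets (space M) {Z k -` A \<inter> space M | k A. k \<le> n}"
    unfolding natural_filtration_def by (rule sets_measure_of) blast
  show space: "space (natural_filtration M Z n) = space M"
    unfolding natural_filtration_def by (simp add: space_measure_of_conv)
  show "subalgebra M (natural_filtration M Z n)"
    using sets.sigma_sets_subset[OF generators] by (auto simp: subalgebra_def sets space)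
qed

lemma natural_filtration_mono:
  fixes Z :: "nat \<Rightarrow> 'a \<Rightarrow> nat"
  assumes "\<And>k. Z k \<in> measurable M (count_space UNIV)" "n \<le> m"
  shows "sets (natural_filtration M Z n) \<subseteq> sets (natural_filtration M Z m)"
  unfolding sets_natural_filtration[OF assms(1)]
  by (rule sigma_sets_mono') (use assms(2) in fastforce)

lemma measurable_natural_filtration:
  fixes Z :: "nat \<Rightarrow> 'a \<Rightarrow> nat"
  assumes "\<And>k. Z k \<in> measurable M (count_space UNIV)"
  shows "Z n \<in> measurable (natural_filtration M Z n) (count_space UNIV)"
  unfolding measurable_count_space_eq2_countable
proof safe
  fix a :: nat
  have "Z n -` {a} \<inter> space M \<in> {Z k -` A \<inter> space M | k A. k \<le> n}" by blast
  then show "Z n -` {a} \<inter> space (natural_filtration M Z n) \<in> sets (natural_filtration M Z n)"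
    unfolding sets_natural_filtration[OF assms] space_natural_filtration[OF assms]
    by (rule sigma_sets.Basic)
qed (simp add: space_natural_filtration[OF assms])

lemma (in finite_measure) sigma_finite_subalgebra_natural_filtration:
  fixes Z :: "nat \<Rightarrow> 'a \<Rightarrow> nat"
  assumes "\<And>k. Z k \<in> measurable M (count_space UNIV)"
  shows "sigma_finite_subalgebra M (natural_filtration M Z n)"
proof -
  interpret finite_measure_subalgebra M "natural_filtration M Z n"
    by unfold_locales (rule subalgebra_natural_filtration[OF assms])
  show ?thesis by unfold_locales
qed

lemma gw_Z_cong:
  assumes "\<And>j i. j < k \<Longrightarrow> X j i \<omega> = X' j i \<omega>'"
  shows "gw_Z X k \<omega> = gw_Z X' k \<omega>'"
  using assms by (induction k) auto

definition gw_Z_table :: "nat \<Rightarrow> (nat \<times> nat \<Rightarrow> nat) \<Rightarrow> nat" where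
  "gw_Z_table k v = gw_Z (\<lambda>k i v. v (k, i)) k v"

lemma gw_Z_table_simps [simp]:
  "gw_Z_table 0 v = 1"
  "gw_Z_table (Suc k) v = (\<Sum>i<gw_Z_table k v. v (k, i))"
  by (simp_all add: gw_Z_table_def)

definition before_gen :: "nat \<Rightarrow> (nat \<times> nat) set" where
  "before_gen n = {p. fst p < n}"

definition at_gen :: "nat \<Rightarrow> (nat \<times> nat) set" where
  "at_gen n = {p. fst p = n}"

lemma measurable_gw_Z_table:
  assumes "k \<le> n"
  shows "gw_Z_table k \<in> measurable (PiM (before_gen n) (\<lambda>_. count_space UNIV)) (count_space UNIV)"
  using assms
proof (induction k)
  case (Suc k)
  have "(\<lambda>v. \<Sum>i<z. v (k, i) :: nat) \<in> measurable (PiM (before_gen n) (\<lambda>_. count_space UNIV)) (count_space UNIV)"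
    for z :: nat
  proof -
    have "\<And>i. (k, i) \<in> before_gen n" using Suc.prems by (auto simp: before_gen_def)
    then show ?thesis by measurable
  qed
  then have "(\<lambda>v. (\<lambda>z v. \<Sum>i<z. v (k, i)) (gw_Z_table k v) v)
      \<in> measurable (PiM (before_gen n) (\<lambda>_. count_space UNIV)) (count_space UNIV)"
    by (rule measurable_compose_countable) (use Suc in auto)
  then show ?case by simp
next
  case 0
  have "gw_Z_table 0 = (\<lambda>_. 1)" by (rule ext) simp
  then show ?case by simp
qed

locale galton_watson = prob_space M for M :: "'a measure" +
  fixes X :: "nat \<Rightarrow> nat \<Rightarrow> 'a \<Rightarrow> nat" and xi :: "'a \<Rightarrow> nat"
  assumes measurable_xi[measurable]: "xi \<in> measurable M (count_space UNIV)"
    and indep_X: "indep_vars (\<lambda>_. count_space UNIV) (\<lambda>(n, i). X n i) UNIV"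
    and distr_X: "\<And>n i. distr M (count_space UNIV) (X n i) = distr M (count_space UNIV) xi"
begin

lemma measurable_X[measurable]: "X n i \<in> measurable M (count_space UNIV)"
  using indep_X unfolding indep_vars_def by (metis (no_types, lifting) UNIV_I case_prod_conv)

lemma measurable_gw_Z[measurable]: "gw_Z X k \<in> measurable M (count_space UNIV)"
proof (induction k)
  case (Suc k)
  have "(\<lambda>\<omega>. (\<lambda>z \<omega>. \<Sum>i<z. X k i \<omega>) (gw_Z X k \<omega>) \<omega>) \<in> measurable M (count_space UNIV)"
    by (rule measurable_compose_countable[OF _ Suc]) measurable
  then show ?case by simp
qed simp

abbreviation F :: "nat \<Rightarrow> 'a measure" where
  "F \<equiv> natural_filtration M (gw_Z X)"

lemmas subalgebra_F = subalgebra_natural_filtration[OF measurable_gw_Z]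
lemmas space_F = space_natural_filtration[OF measurable_gw_Z]
lemmas measurable_gw_Z_F = measurable_natural_filtration[OF measurable_gw_Z]

lemma sets_F_subset: "sets (F n) \<subseteq> sets M"
  using subalgebra_F[where n=n] by (simp add: subalgebra_def)

definition history :: "nat \<Rightarrow> 'a \<Rightarrow> nat \<times> nat \<Rightarrow> nat" where
  "history n \<omega> = restrict (\<lambda>p. (\<lambda>(k, i). X k i) p \<omega>) (before_gen n)"

definition offspring :: "nat \<Rightarrow> 'a \<Rightarrow> nat \<times> nat \<Rightarrow> nat" where
  "offspring n \<omega> = restrict (\<lambda>p. (\<lambda>(k, i). X k i) p \<omega>) (at_gen n)"

lemma indep_history_offspring:
  "indep_var (PiM (before_gen n) (\<lambda>_. count_space UNIV)) (history n)
             (PiM (at_gen n) (\<lambda>_. count_space UNIV)) (offspring n)"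
  unfolding history_def offspring_def
  by (rule indep_var_restrict[OF indep_X]) (auto simp: before_gen_def at_gen_def)

lemma measurable_history[measurable]: "history n \<in> measurable M (PiM (before_gen n) (\<lambda>_. count_space UNIV))"
  unfolding history_def by (rule measurable_restrict) (auto split: prod.splits)

lemma measurable_offspring[measurable]: "offspring n \<in> measurable M (PiM (at_gen n) (\<lambda>_. count_space UNIV))"
  unfolding offspring_def by (rule measurable_restrict) (auto split: prod.splits)

lemma gw_Z_eq_gw_Z_table_history: "k \<le> n \<Longrightarrow> gw_Z X k \<omega> = gw_Z_table k (history n \<omega>)"
  unfolding gw_Z_table_def by (rule gw_Z_cong) (auto simp: history_def before_gen_def)

lemma offspring_apply [simp]: "offspring n \<omega> (n, i) = X n i \<omega>"
  by (simp add: offspring_def at_gen_def)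

text \<open>Since \<open>history n\<close> is independent of \<open>offspring n\<close>, so is every event of \<open>F n\<close>.\<close>
lemma sets_F_history_vimage:
  assumes "A \<in> sets (F n)"
  shows "\<exists>E \<in> sets (PiM (before_gen n) (\<lambda>_. count_space UNIV)). A = history n -` E \<inter> space M"
proof -
  let ?P = "PiM (before_gen n) (\<lambda>_. count_space UNIV)"
  let ?V = "vimage_algebra (space M) (history n) ?P"
  have history_space: "history n \<in> space M \<rightarrow> space ?P"
    using measurable_space[OF measurable_history] by auto
  have "{gw_Z X k -` B \<inter> space M | k B. k \<le> n} \<subseteq> sets ?V"
  proof safe
    fix k :: nat and B :: "nat set" assume "k \<le> n"
    then have "gw_Z X k -` B \<inter> space M = history n -` (gw_Z_table k -` B \<inter> space ?P) \<inter> space M"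
      using history_space gw_Z_eq_gw_Z_table_history by auto
    moreover have "gw_Z_table k -` B \<inter> space ?P \<in> sets ?P"
      using measurable_gw_Z_table[OF \<open>k \<le> n\<close>] by (auto simp: measurable_def)
    ultimately show "gw_Z X k -` B \<inter> space M \<in> sets ?V"
      unfolding sets_vimage_algebra2[OF history_space] by blast
  qed
  then have "sets (F n) \<subseteq> sets ?V"
    unfolding sets_natural_filtration[OF measurable_gw_Z] using sets.sigma_sets_subset[of _ ?V] by simp
  then show ?thesis
    using assms unfolding sets_vimage_algebra2[OF history_space] by blast
qed

lemma nn_integral_indicator_offspring:
  fixes h :: "(nat \<times> nat \<Rightarrow> nat) \<Rightarrow> ennreal"
  assumes A: "A \<in> sets (F n)"
    and [measurable]: "h \<in> borel_measurable (PiM (at_gen n) (\<lambda>_. count_space UNIV))"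
  shows "(\<integral>\<^sup>+\<omega>. indicator A \<omega> * h (offspring n \<omega>) \<partial>M) = emeasure M A * (\<integral>\<^sup>+\<omega>. h (offspring n \<omega>) \<partial>M)"
proof -
  obtain E where E: "E \<in> sets (PiM (before_gen n) (\<lambda>_. count_space UNIV))" "A = history n -` E \<inter> space M"
    using sets_F_history_vimage[OF A] by blast
  have "(\<integral>\<^sup>+\<omega>. indicator A \<omega> * h (offspring n \<omega>) \<partial>M)
      = (\<integral>\<^sup>+\<omega>. indicator E (history n \<omega>) * h (offspring n \<omega>) \<partial>M)"
    by (rule nn_integral_cong) (simp add: E(2) split: split_indicator)
  also have "\<dots> = (\<integral>\<^sup>+\<omega>. indicator E (history n \<omega>) \<partial>M) * (\<integral>\<^sup>+\<omega>. h (offspring n \<omega>) \<partial>M)"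
    by (rule indep_var_nn_integral_mult[OF indep_history_offspring]) (use E(1) in auto)
  also have "(\<integral>\<^sup>+\<omega>. indicator E (history n \<omega>) \<partial>M) = emeasure M A"
  proof -
    have "(\<integral>\<^sup>+\<omega>. indicator E (history n \<omega>) \<partial>M) = (\<integral>\<^sup>+\<omega>. indicator A \<omega> \<partial>M)"
      by (rule nn_integral_cong) (simp add: E(2) split: split_indicator)
    moreover have "A \<in> sets M" using A sets_F_subset by blast
    ultimately show ?thesis by simp
  qed
  finally show ?thesis .
qed

lemma
  fixes g :: "nat \<Rightarrow> real"
  shows integrable_X_iff: "integrable M (\<lambda>\<omega>. g (X n i \<omega>)) \<longleftrightarrow> integrable M (\<lambda>\<omega>. g (xi \<omega>))"
    and integral_X_eq: "(\<integral>\<omega>. g (X n i \<omega>) \<partial>M) = (\<integral>\<omega>. g (xi \<omega>) \<partial>M)"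
  using integrable_distr_eq[of "X n i" M "count_space UNIV" g] integrable_distr_eq[of xi M "count_space UNIV" g]
    integral_distr[of "X n i" M "count_space UNIV" g] integral_distr[of xi M "count_space UNIV" g]
    distr_X[of n i] by simp_all

lemma nn_integral_offspring_mean_powr_le:
  assumes integrable_xi: "integrable M (\<lambda>\<omega>. real (xi \<omega>))"
    and integrable_xi_powr: "integrable M (\<lambda>\<omega>. real (xi \<omega>) powr (1 + \<epsilon>))"
    and "z \<ge> 1" "T > 0" "0 \<le> \<delta>" "\<delta> \<le> \<epsilon>"
  shows "(\<integral>\<^sup>+\<omega>. ennreal ((real (\<Sum>i<z. X n i \<omega>) / z) powr (1 + \<delta>)) \<partial>M)
     \<le> ennreal (T powr \<delta> * expectation (\<lambda>\<omega>. real (xi \<omega>))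
               + T powr (\<delta> - \<epsilon>) * expectation (\<lambda>\<omega>. real (xi \<omega>) powr (1 + \<epsilon>)))"
proof -
  define B where "B \<omega> = T powr \<delta> * ((\<Sum>i<z. real (X n i \<omega>)) / z)
                      + T powr (\<delta> - \<epsilon>) * ((\<Sum>i<z. real (X n i \<omega>) powr (1 + \<epsilon>)) / z)" for \<omega>
  have integrable_B: "integrable M B"
    using integrable_X_iff[of real] integrable_X_iff[of "\<lambda>k. real k powr (1 + \<epsilon>)"]
      integrable_xi integrable_xi_powr
    unfolding B_def by auto
  have integral_B: "(\<integral>\<omega>. B \<omega> \<partial>M) = T powr \<delta> * expectation (\<lambda>\<omega>. real (xi \<omega>))
                     + T powr (\<delta> - \<epsilon>) * expectation (\<lambda>\<omega>. real (xi \<omega>) powr (1 + \<epsilon>))"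
    using integrable_X_iff[of real] integrable_X_iff[of "\<lambda>k. real k powr (1 + \<epsilon>)"]
      integral_X_eq[of real] integral_X_eq[of "\<lambda>k. real k powr (1 + \<epsilon>)"]
      integrable_xi integrable_xi_powr \<open>z \<ge> 1\<close>
    unfolding B_def by (simp add: integral_add integral_sum)
  have le_B: "(real (\<Sum>i<z. X n i \<omega>) / z) powr (1 + \<delta>) \<le> B \<omega>" for \<omega>
  proof -
    let ?y = "(\<Sum>i<z. real (X n i \<omega>)) / z"
    have "?y powr (1 + \<delta>) \<le> T powr \<delta> * ?y + T powr (\<delta> - \<epsilon>) * ?y powr (1 + \<epsilon>)"
      using assms by (intro powr_le_split_at_level divide_nonneg_nonneg sum_nonneg) auto
    moreover have "?y powr (1 + \<epsilon>) \<le> (\<Sum>i<z. real (X n i \<omega>) powr (1 + \<epsilon>)) / z"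
      using powr_mean_le_mean_powr[of "{..<z}" "\<lambda>i. real (X n i \<omega>)" "1 + \<epsilon>"] assms by (auto simp: lessThan_empty_iff)
    ultimately show ?thesis
      unfolding B_def using mult_left_mono[of _ _ "T powr (\<delta> - \<epsilon>)"] by force
  qed
  have "(\<integral>\<^sup>+\<omega>. ennreal ((real (\<Sum>i<z. X n i \<omega>) / z) powr (1 + \<delta>)) \<partial>M) \<le> (\<integral>\<^sup>+\<omega>. ennreal (B \<omega>) \<partial>M)"
    using le_B by (intro nn_integral_mono) (simp add: ennreal_leI)
  also have "\<dots> = ennreal (\<integral>\<omega>. B \<omega> \<partial>M)"
    using le_B by (intro nn_integral_eq_integral integrable_B AE_I2) (meson order.trans powr_ge_zero)
  finally show ?thesis using integral_B by simp
qed

end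

locale gw_contraction = galton_watson +
  fixes \<beta> \<delta> c :: real
  assumes beta_pos: "\<beta> > 0" and c_nonneg: "c \<ge> 0"
    and contraction: "\<beta> powr (1 + \<delta>) * c \<le> 1"
    and nn_integral_mean_powr_le:
      "\<And>n z. z \<ge> 1 \<Longrightarrow> (\<integral>\<^sup>+\<omega>. ennreal ((real (\<Sum>i<z. X n i \<omega>) / z) powr (1 + \<delta>)) \<partial>M) \<le> ennreal c"
begin

definition W :: "nat \<Rightarrow> 'a \<Rightarrow> real" where
  "W n \<omega> = (real (gw_Z X n \<omega>) * \<beta> ^ n) powr (1 + \<delta>)"

lemma measurable_W[measurable]: "W n \<in> borel_measurable M"
  unfolding W_def by measurable

lemma W_nonneg: "W n \<omega> \<ge> 0"
  unfolding W_def by simp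

lemma measurable_W_F: "W n \<in> borel_measurable (F n)"
proof -
  have "(\<lambda>\<omega>. (\<lambda>k. (real k * \<beta> ^ n) powr (1 + \<delta>)) (gw_Z X n \<omega>)) \<in> borel_measurable (F n)"
    by (rule measurable_compose[OF measurable_gw_Z_F]) simp
  then show ?thesis unfolding W_def by simp
qed

lemma nn_integral_next_generation_le:
  "(\<integral>\<^sup>+\<omega>. ennreal ((real (\<Sum>i<z. X n i \<omega>) * \<beta> ^ Suc n) powr (1 + \<delta>)) \<partial>M)
     \<le> ennreal ((real z * \<beta> ^ n) powr (1 + \<delta>))"
proof (cases "z = 0")
  case False
  let ?C = "(real z * \<beta> ^ Suc n) powr (1 + \<delta>)"
  have "(real (\<Sum>i<z. X n i \<omega>) * \<beta> ^ Suc n) powr (1 + \<delta>)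
      = ?C * (real (\<Sum>i<z. X n i \<omega>) / z) powr (1 + \<delta>)" for \<omega>
  proof -
    have "real (\<Sum>i<z. X n i \<omega>) * \<beta> ^ Suc n = (real z * \<beta> ^ Suc n) * (real (\<Sum>i<z. X n i \<omega>) / z)"
      using False by simp
    then show ?thesis using beta_pos by (simp only: powr_mult)
  qed
  then have "(\<integral>\<^sup>+\<omega>. ennreal ((real (\<Sum>i<z. X n i \<omega>) * \<beta> ^ Suc n) powr (1 + \<delta>)) \<partial>M)
      = ennreal ?C * (\<integral>\<^sup>+\<omega>. ennreal ((real (\<Sum>i<z. X n i \<omega>) / z) powr (1 + \<delta>)) \<partial>M)"
    by (simp add: ennreal_mult nn_integral_cmult)
  also have "\<dots> \<le> ennreal ?C * ennreal c"
    using nn_integral_mean_powr_le[of z n] False by (intro mult_left_mono) auto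
  also have "\<dots> = ennreal ((real z * \<beta> ^ n) powr (1 + \<delta>) * (\<beta> powr (1 + \<delta>) * c))"
    using beta_pos c_nonneg by (simp add: ennreal_mult powr_mult[symmetric] mult_ac)
  also have "\<dots> \<le> ennreal ((real z * \<beta> ^ n) powr (1 + \<delta>))"
    using contraction c_nonneg beta_pos by (intro ennreal_leI mult_left_le) auto
  finally show ?thesis .
qed simp

lemma nn_integral_level_set_step:
  fixes z :: nat
  assumes A: "A \<in> sets (F n)"
  defines "A\<^sub>z \<equiv> A \<inter> gw_Z X n -` {z}"
  shows "(\<integral>\<^sup>+\<omega>. indicator A\<^sub>z \<omega> * ennreal (W (Suc n) \<omega>) \<partial>M) \<le> (\<integral>\<^sup>+\<omega>. indicator A\<^sub>z \<omega> * ennreal (W n \<omega>) \<partial>M)"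
proof -
  have "A\<^sub>z = A \<inter> (gw_Z X n -` {z} \<inter> space (F n))"
    using sets.sets_into_space[OF A] unfolding A\<^sub>z_def by blast
  also have "\<dots> \<in> sets (F n)"
    by (rule sets.Int[OF A measurable_sets[OF measurable_gw_Z_F]]) simp
  finally have A\<^sub>z_F: "A\<^sub>z \<in> sets (F n)" .
  have A\<^sub>z_M: "A\<^sub>z \<in> sets M" using sets_F_subset A\<^sub>z_F ..
  define h where "h v = ennreal ((real (\<Sum>i<z. v (n, i)) * \<beta> ^ Suc n) powr (1 + \<delta>))"
    for v :: "nat \<times> nat \<Rightarrow> nat"
  have "h \<in> borel_measurable (PiM (at_gen n) (\<lambda>_. count_space UNIV))"
  proof -
    have "\<And>i. (n, i) \<in> at_gen n" by (simp add: at_gen_def)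
    then show ?thesis unfolding h_def by measurable
  qed
  \<comment> \<open>on \<open>A\<^sub>z\<close> the next generation is the sum of the first \<open>z\<close> offspring numbers of generation \<open>n\<close>\<close>
  have "(\<integral>\<^sup>+\<omega>. indicator A\<^sub>z \<omega> * ennreal (W (Suc n) \<omega>) \<partial>M)
      = (\<integral>\<^sup>+\<omega>. indicator A\<^sub>z \<omega> * h (offspring n \<omega>) \<partial>M)"
    by (rule nn_integral_cong) (simp add: A\<^sub>z_def W_def h_def split: split_indicator)
  also have "\<dots> = emeasure M A\<^sub>z * (\<integral>\<^sup>+\<omega>. h (offspring n \<omega>) \<partial>M)"
    by (rule nn_integral_indicator_offspring[OF A\<^sub>z_F]) fact
  also have "\<dots> \<le> emeasure M A\<^sub>z * ennreal ((real z * \<beta> ^ n) powr (1 + \<delta>))"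
    unfolding h_def offspring_apply by (rule mult_left_mono[OF nn_integral_next_generation_le]) simp
  also have "\<dots> = (\<integral>\<^sup>+\<omega>. ennreal ((real z * \<beta> ^ n) powr (1 + \<delta>)) * indicator A\<^sub>z \<omega> \<partial>M)"
    by (subst nn_integral_cmult_indicator[OF A\<^sub>z_M]) (rule mult.commute)
  also have "\<dots> = (\<integral>\<^sup>+\<omega>. indicator A\<^sub>z \<omega> * ennreal (W n \<omega>) \<partial>M)"
    by (rule nn_integral_cong) (simp add: A\<^sub>z_def W_def split: split_indicator)
  finally show ?thesis .
qed

lemma nn_integral_W_step:
  assumes "A \<in> sets (F n)"
  shows "(\<integral>\<^sup>+\<omega>. indicator A \<omega> * ennreal (W (Suc n) \<omega>) \<partial>M) \<le> (\<integral>\<^sup>+\<omega>. indicator A \<omega> * ennreal (W n \<omega>) \<partial>M)"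
proof -
  have [measurable]: "A \<in> sets M" using sets_F_subset assms ..
  have "(\<integral>\<^sup>+\<omega>. indicator A \<omega> * ennreal (W (Suc n) \<omega>) \<partial>M)
      = (\<Sum>z. \<integral>\<^sup>+\<omega>. indicator (A \<inter> gw_Z X n -` {z}) \<omega> * ennreal (W (Suc n) \<omega>) \<partial>M)"
    by (rule nn_integral_indicator_split_nat_valued) measurable
  also have "\<dots> \<le> (\<Sum>z. \<integral>\<^sup>+\<omega>. indicator (A \<inter> gw_Z X n -` {z}) \<omega> * ennreal (W n \<omega>) \<partial>M)"
    by (intro suminf_le nn_integral_level_set_step[OF assms]) auto
  also have "\<dots> = (\<integral>\<^sup>+\<omega>. indicator A \<omega> * ennreal (W n \<omega>) \<partial>M)"
    by (rule nn_integral_indicator_split_nat_valued[symmetric]) measurable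
  finally show ?thesis .
qed

lemma integrable_W: "integrable M (W n)"
proof -
  have "(\<integral>\<^sup>+\<omega>. ennreal (W n \<omega>) \<partial>M) \<le> 1"
  proof (induction n)
    case 0
    then show ?case by (simp add: W_def emeasure_space_1)
  next
    case (Suc n)
    have "space M \<in> sets (F n)" using sets.top[of "F n"] by (simp add: space_F)
    moreover have "(\<integral>\<^sup>+\<omega>. indicator (space M) \<omega> * ennreal (W k \<omega>) \<partial>M) = (\<integral>\<^sup>+\<omega>. ennreal (W k \<omega>) \<partial>M)" for k
      by (rule nn_integral_cong) simp
    ultimately show ?case using nn_integral_W_step[of "space M" n] Suc by simp
  qed
  then show ?thesis
    by (intro integrableI_nonneg) (auto simp: W_nonneg top.not_eq_extremum intro: le_less_trans)
qed

lemma integral_W_step: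
  assumes A: "A \<in> sets (F n)"
  shows "(\<integral>\<omega>. indicator A \<omega> * W (Suc n) \<omega> \<partial>M) \<le> (\<integral>\<omega>. indicator A \<omega> * W n \<omega> \<partial>M)"
proof -
  have "A \<in> sets M" using sets_F_subset A ..
  have nn_integral_eq: "(\<integral>\<^sup>+\<omega>. indicator A \<omega> * ennreal (W k \<omega>) \<partial>M) = ennreal (\<integral>\<omega>. indicator A \<omega> * W k \<omega> \<partial>M)" for k
  proof -
    have "(\<integral>\<^sup>+\<omega>. indicator A \<omega> * ennreal (W k \<omega>) \<partial>M) = (\<integral>\<^sup>+\<omega>. ennreal (indicator A \<omega> * W k \<omega>) \<partial>M)"
      by (simp only: indicator_mult_ennreal)
    also have "\<dots> = ennreal (\<integral>\<omega>. indicator A \<omega> * W k \<omega> \<partial>M)"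
      using integrable_mult_indicator[OF \<open>A \<in> sets M\<close> integrable_W]
      by (intro nn_integral_eq_integral) (auto simp: W_nonneg)
    finally show ?thesis .
  qed
  have "0 \<le> (\<integral>\<omega>. indicator A \<omega> * W n \<omega> \<partial>M)"
    by (rule integral_nonneg_AE) (simp add: W_nonneg)
  moreover have "ennreal (\<integral>\<omega>. indicator A \<omega> * W (Suc n) \<omega> \<partial>M) \<le> ennreal (\<integral>\<omega>. indicator A \<omega> * W n \<omega> \<partial>M)"
    using nn_integral_W_step[OF A] unfolding nn_integral_eq .
  ultimately show ?thesis by (simp only: ennreal_le_iff)
qed

lemma supermartingale_W: "supermartingale M F W"
proof (rule supermartingale_of_one_step)
  fix n
  show "sigma_finite_subalgebra M (F n)"
    by (rule sigma_finite_subalgebra_natural_filtration[OF measurable_gw_Z])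
  show "AE \<omega> in M. real_cond_exp M (F n) (W (Suc n)) \<omega> \<le> W n \<omega>"
    by (rule sigma_finite_subalgebra.real_cond_exp_le_of_integral_indicator_le
        [OF \<open>sigma_finite_subalgebra M (F n)\<close> integrable_W integrable_W measurable_W_F integral_W_step])
qed (simp_all add: natural_filtration_mono[OF measurable_gw_Z] measurable_W_F integrable_W)

end

theorem lemma6p1:
  fixes M :: "'a measure" and X :: "nat \<Rightarrow> nat \<Rightarrow> 'a \<Rightarrow> nat" and xi :: "'a \<Rightarrow> nat"
    and \<mu> \<epsilon> \<beta> :: real
  assumes "prob_space M"
    and "xi \<in> measurable M (count_space UNIV)"
    and "prob_space.indep_vars M (\<lambda>_. count_space UNIV) (\<lambda>(n, i). X n i) UNIV"
    and "\<And>n i. distr M (count_space UNIV) (X n i) = distr M (count_space UNIV) xi"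
    and "integrable M (\<lambda>\<omega>. real (xi \<omega>))"
    and "\<mu> = prob_space.expectation M (\<lambda>\<omega>. real (xi \<omega>))"
    and "\<mu> < 1"
    and "\<epsilon> > 0"
    and "integrable M (\<lambda>\<omega>. real (xi \<omega>) powr (1 + \<epsilon>))"
    and "1 < \<beta>" and "\<beta> * \<mu> < 1"
  shows "\<exists>\<kappa>>0. \<forall>\<delta>. 0 < \<delta> \<and> \<delta> < \<kappa> \<longrightarrow>
           supermartingale M (natural_filtration M (gw_Z X))
             (\<lambda>n \<omega>. (real (gw_Z X n \<omega>) * \<beta> ^ n) powr (1 + \<delta>))"
proof -
  interpret galton_watson M X xi
    by (intro galton_watson.intro galton_watson_axioms.intro) (use assms in auto)
  define K where "K = expectation (\<lambda>\<omega>. real (xi \<omega>) powr (1 + \<epsilon>))"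
  have "\<mu> \<ge> 0" "K \<ge> 0"
    unfolding assms(6) K_def by (auto intro: integral_nonneg_AE)
  then obtain T \<kappa> where T: "T > 0" and \<kappa>: "\<kappa> > 0" "\<kappa> \<le> \<epsilon>"
    and contracting: "\<forall>\<delta>. 0 < \<delta> \<and> \<delta> < \<kappa> \<longrightarrow> \<beta> powr (1 + \<delta>) * (T powr \<delta> * \<mu> + T powr (\<delta> - \<epsilon>) * K) < 1"
    using exists_contracting_exponents[of \<beta> \<mu> K \<epsilon>] assms by blast
  show ?thesis
  proof (intro exI[of _ \<kappa>] conjI allI impI)
    fix \<delta> :: real assume \<delta>: "0 < \<delta> \<and> \<delta> < \<kappa>"
    interpret gw_contraction M X xi \<beta> \<delta> "T powr \<delta> * \<mu> + T powr (\<delta> - \<epsilon>) * K"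
    proof unfold_locales
      show "\<beta> > 0" using assms(10) by simp
      show "0 \<le> T powr \<delta> * \<mu> + T powr (\<delta> - \<epsilon>) * K" using \<open>\<mu> \<ge> 0\<close> \<open>K \<ge> 0\<close> by simp
      show "\<beta> powr (1 + \<delta>) * (T powr \<delta> * \<mu> + T powr (\<delta> - \<epsilon>) * K) \<le> 1"
        using contracting \<delta> by (simp add: less_imp_le)
      show "(\<integral>\<^sup>+\<omega>. ennreal ((real (\<Sum>i<z. X n i \<omega>) / z) powr (1 + \<delta>)) \<partial>M)
          \<le> ennreal (T powr \<delta> * \<mu> + T powr (\<delta> - \<epsilon>) * K)" if "z \<ge> 1" for n z
        unfolding assms(6) K_def using \<delta> \<kappa>
        by (intro nn_integral_offspring_mean_powr_le[OF assms(5) assms(9) that T]) auto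
    qed
    show "supermartingale M F (\<lambda>n \<omega>. (real (gw_Z X n \<omega>) * \<beta> ^ n) powr (1 + \<delta>))"
      using supermartingale_W unfolding W_def .
  qed (fact \<kappa>)
qed

end
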